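(* Let $n\geq 2$ be an integer and let $G$ be a tree of order $m\geq 3$. Then $\chi_{ld}(G[\overline{K_{n}}])=2$ if and only if $G$ is a star $K_{1,m-1}$.
   Context: All graphs are finite, simple and undirected. For a graph $G=(V,E)$ of order $N$ without isolated vertices, a bijection $f\colon V\to\{1,2,\dots,N\}$ is a local distance antimagic labeling if $w(u)\neq w(v)$ for every edge $uv$, where $w(u)=\sum_{x\in N(u)}f(x)$ and $N(u)$ is the open neighborhood of $u$. $\chi_{ld}(G)$ is the minimum number of distinct weights over all local distance antimagic labelings of $G$. $\overline{K_n}$ is the edgeless graph on $n$ vertices. The lexicographic product $G[H]$ has vertex set $V(G)\times V(H)$, with $(g,h)$ adjacent to $(g',h')$ iff $gg'\in E(G)$, or $g=g'$ and $hh'\in E(H)$. *)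

theory Defs
  imports Main
begin

definition is_graph :: "'a set \<Rightarrow> ('a \<Rightarrow> 'a \<Rightarrow> bool) \<Rightarrow> bool" where
  "is_graph V E \<longleftrightarrow> finite V \<and> (\<forall>u v. E u v \<longrightarrow> u \<in> V \<and> v \<in> V \<and> u \<noteq> v \<and> E v u)"

definition nbhd :: "'a set \<Rightarrow> ('a \<Rightarrow> 'a \<Rightarrow> bool) \<Rightarrow> 'a \<Rightarrow> 'a set" where
  "nbhd V E u = {x \<in> V. E u x}"

definition weight :: "'a set \<Rightarrow> ('a \<Rightarrow> 'a \<Rightarrow> bool) \<Rightarrow> ('a \<Rightarrow> nat) \<Rightarrow> 'a \<Rightarrow> nat" where
  "weight V E f u = (\<Sum>x\<in>nbhd V E u. f x)"

definition local_dist_antimagic :: "'a set \<Rightarrow> ('a \<Rightarrow> 'a \<Rightarrow> bool) \<Rightarrow> ('a \<Rightarrow> nat) \<Rightarrow> bool" where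
  "local_dist_antimagic V E f \<longleftrightarrow> bij_betw f V {1..card V} \<and>
     (\<forall>u v. u \<in> V \<and> v \<in> V \<and> E u v \<longrightarrow> weight V E f u \<noteq> weight V E f v)"

definition chi_ld :: "'a set \<Rightarrow> ('a \<Rightarrow> 'a \<Rightarrow> bool) \<Rightarrow> nat" where
  "chi_ld V E = (LEAST k. \<exists>f. local_dist_antimagic V E f \<and> card (weight V E f ` V) = k)"

definition connected_graph :: "'a set \<Rightarrow> ('a \<Rightarrow> 'a \<Rightarrow> bool) \<Rightarrow> bool" where
  "connected_graph V E \<longleftrightarrow> (\<forall>u\<in>V. \<forall>v\<in>V. E\<^sup>*\<^sup>* u v)"

definition acyclic_graph :: "'a set \<Rightarrow> ('a \<Rightarrow> 'a \<Rightarrow> bool) \<Rightarrow> bool" where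
  "acyclic_graph V E \<longleftrightarrow> \<not> (\<exists>xs. length xs \<ge> 3 \<and> distinct xs \<and> set xs \<subseteq> V \<and>
      (\<forall>i. i + 1 < length xs \<longrightarrow> E (xs ! i) (xs ! (i + 1))) \<and> E (last xs) (hd xs))"

definition is_tree :: "'a set \<Rightarrow> ('a \<Rightarrow> 'a \<Rightarrow> bool) \<Rightarrow> bool" where
  "is_tree V E \<longleftrightarrow> is_graph V E \<and> V \<noteq> {} \<and> connected_graph V E \<and> acyclic_graph V E"

definition is_star :: "'a set \<Rightarrow> ('a \<Rightarrow> 'a \<Rightarrow> bool) \<Rightarrow> bool" where
  "is_star V E \<longleftrightarrow> (\<exists>c\<in>V. \<forall>u v. E u v \<longleftrightarrow> (u \<in> V \<and> v \<in> V \<and> u \<noteq> v \<and> (u = c \<or> v = c)))"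

text \<open>Lexicographic product G[H]: vertex set V(G) x V(H).\<close>
definition lex_edges :: "('a \<Rightarrow> 'a \<Rightarrow> bool) \<Rightarrow> ('b \<Rightarrow> 'b \<Rightarrow> bool) \<Rightarrow> ('a \<times> 'b) \<Rightarrow> ('a \<times> 'b) \<Rightarrow> bool" where
  "lex_edges E F = (\<lambda>(g, h) (g', h'). E g g' \<or> (g = g' \<and> F h h'))"

definition empty_verts :: "nat \<Rightarrow> nat set" where "empty_verts n = {0..<n}"
definition empty_edges :: "nat \<Rightarrow> nat \<Rightarrow> bool" where "empty_edges = (\<lambda>_ _. False)"

end

theory Submission
  imports Defs
begin

(*
  Let E_n be the edgeless graph on n vertices and write S x for the sum of the labels on the
  fibre {x} x E_n. Every vertex (x, i) of G[E_n] has the weight w x = sum of S y over the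
  neighbours y of x, independently of i.

  If G is a star with centre c, every weight is w c or S c, and two occur because adjacent
  vertices differ. Conversely, take a leaf a with neighbour b, so w a = S b. With only two
  weights, every neighbour u of b has w u = w a = S b; as labels are positive, u has no
  neighbour other than b, and connectivity makes G a star with centre b.

  Since chi_ld is a LEAST, this direction also needs some local distance antimagic labeling of
  G[E_n] for every tree G (m = |G|). Let H be the smaller colour class of G, p = |H|. Label
  (x, i) by i * m + r i (sigma x) + 1, where the r i are permutations of {0..m-1} whose column
  sums lie in a window of width 2 and reach a threshold in exactly p columns, and sigma maps H
  onto these columns. For an edge xy with x in H, all neighbours of x lie below the threshold
  and all neighbours of y above it: if x has at most as many neighbours as y this gives
  w x < w y, and otherwise the narrow window gives w x > w y.
*)

section \<open>Trees and their bipartition\<close>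

definition graph_path :: "'a set \<Rightarrow> ('a \<Rightarrow> 'a \<Rightarrow> bool) \<Rightarrow> 'a list \<Rightarrow> bool" where
  "graph_path V E xs \<longleftrightarrow>
     distinct xs \<and> set xs \<subseteq> V \<and> (\<forall>i. i + 1 < length xs \<longrightarrow> E (xs ! i) (xs ! (i + 1)))"

lemma graph_path_Cons:
  assumes "graph_path V E xs" "xs \<noteq> []" "E w (hd xs)" "w \<in> V" "w \<notin> set xs"
  shows "graph_path V E (w # xs)"
  using assms by (auto simp: graph_path_def nth_Cons hd_conv_nth split: nat.split)

lemma acyclic_path_hd_nbr:
  assumes ac: "acyclic_graph V E" and g: "is_graph V E" and p: "graph_path V E xs"
    and e: "E (hd xs) w" and w: "w \<in> set xs"
  shows "w = xs ! 1"
proof -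
  obtain i where i: "i < length xs" "xs ! i = w" using w by (meson in_set_conv_nth)
  have "xs \<noteq> []" using w by auto
  have "hd xs \<noteq> w" using e g by (auto simp: is_graph_def)
  then have "i \<noteq> 0" using i \<open>xs \<noteq> []\<close> by (metis hd_conv_nth)
  moreover have "\<not> 2 \<le> i"
  proof
    assume "2 \<le> i"
    define cs where "cs = take (Suc i) xs"
    have "length cs \<ge> 3" "distinct cs" "set cs \<subseteq> V"
      using \<open>2 \<le> i\<close> i p set_take_subset[of "Suc i" xs]
      by (auto simp: cs_def graph_path_def)
    moreover have "\<forall>j. j + 1 < length cs \<longrightarrow> E (cs ! j) (cs ! (j + 1))"
      using p i by (simp add: cs_def graph_path_def)
    moreover have "E (last cs) (hd cs)"
    proof -
      have "last cs = w" using i by (simp add: cs_def take_Suc_conv_app_nth)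
      moreover have "hd cs = hd xs" by (simp add: cs_def)
      ultimately show ?thesis using e g by (simp add: is_graph_def)
    qed
    ultimately show False using ac unfolding acyclic_graph_def by blast
  qed
  ultimately have "i = 1" by simp
  then show ?thesis using i by simp
qed

lemma connected_graph_has_edge:
  assumes "connected_graph V E" "2 \<le> card V"
  obtains u v where "E u v"
proof -
  have "V \<noteq> {}" using assms(2) by auto
  then obtain u where u: "u \<in> V" by blast
  have "card (V - {u}) \<noteq> 0" using assms(2) u by (simp add: card_Diff_singleton_if)
  then have "V - {u} \<noteq> {}" by (metis card.empty)
  then obtain v where "v \<in> V" "v \<noteq> u" by blast
  have "E\<^sup>*\<^sup>* u v" using assms(1) u \<open>v \<in> V\<close> by (simp add: connected_graph_def)
  from this \<open>v \<noteq> u\<close> show thesis by (cases rule: converse_rtranclpE) (auto intro: that)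
qed

lemma tree_has_leaf:
  assumes t: "is_tree V E" and V2: "2 \<le> card V"
  obtains a b where "a \<in> V" "E a b" "\<And>w. E a w \<Longrightarrow> w = b"
proof -
  have g: "is_graph V E" and ac: "acyclic_graph V E" and conn: "connected_graph V E"
    using t by (auto simp: is_tree_def)
  have fin: "finite V" using g by (simp add: is_graph_def)
  obtain u v where "E u v" using connected_graph_has_edge[OF conn V2] .
  then have uv: "graph_path V E [u, v]"
    using g by (auto simp: graph_path_def is_graph_def)
  define P where "P xs \<longleftrightarrow> graph_path V E xs \<and> 2 \<le> length xs" for xs
  have "length xs < card V + 1" if "P xs" for xs
  proof -
    have "distinct xs" "set xs \<subseteq> V" using that by (auto simp: P_def graph_path_def)
    then show ?thesis using card_mono[OF fin] distinct_card by (metis less_Suc_eq_le Suc_eq_plus1)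
  qed
  moreover have "P [u, v]" using uv by (simp add: P_def)
  ultimately obtain xs where xs: "P xs" and longest: "\<And>ys. P ys \<Longrightarrow> length ys \<le> length xs"
    using ex_has_greatest_nat[of P "[u, v]" length "card V + 1"] by blast
  have p: "graph_path V E xs" and l2: "2 \<le> length xs" using xs by (auto simp: P_def)
  have "E (xs ! 0) (xs ! 1)" using p l2 by (simp add: graph_path_def)
  then have hd_edge: "E (hd xs) (xs ! 1)" using l2 by (metis hd_conv_nth list.size(3) not_numeral_le_zero)
  have "w = xs ! 1" if e: "E (hd xs) w" for w
  proof (cases "w \<in> set xs")
    case True
    then show ?thesis using acyclic_path_hd_nbr[OF ac g p e] by blast
  next
    case False
    have "w \<in> V" using e g by (auto simp: is_graph_def)
    moreover have "xs \<noteq> []" using l2 by auto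
    ultimately have "P (w # xs)"
      using graph_path_Cons[OF p _ _ _ False] e g l2 by (simp add: P_def is_graph_def)
    from longest[OF this] show ?thesis by simp
  qed
  moreover have "hd xs \<in> V" using p l2 by (cases xs) (simp_all add: graph_path_def)
  ultimately show thesis using that hd_edge by blast
qed

lemma rtranclp_avoid_leaf:
  assumes leaf: "\<And>w. E a w \<Longrightarrow> w = b" and sym: "\<And>x y. E x y \<Longrightarrow> E y x" and "b \<noteq> a"
    and "E\<^sup>*\<^sup>* u w" and "u \<noteq> a"
  shows "(\<lambda>x y. E x y \<and> x \<noteq> a \<and> y \<noteq> a)\<^sup>*\<^sup>* u (if w = a then b else w)"
  using \<open>E\<^sup>*\<^sup>* u w\<close>
proof (induction rule: rtranclp_induct)
  case base
  then show ?case using \<open>u \<noteq> a\<close> by simp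
next
  case (step y z)
  show ?case
  proof (cases "y = a")
    case True
    then show ?thesis using step leaf by fastforce
  next
    case False
    then have "(\<lambda>x y. E x y \<and> x \<noteq> a \<and> y \<noteq> a)\<^sup>*\<^sup>* u y" using step.IH by simp
    moreover have "z = a \<Longrightarrow> y = b" using step.hyps(2) sym leaf by blast
    ultimately show ?thesis using False step.hyps(2) by (cases "z = a") (auto intro: rtranclp.rtrancl_into_rtrancl)
  qed
qed

lemma tree_remove_leaf:
  assumes t: "is_tree V E" and "a \<in> V" and ab: "E a b" and leaf: "\<And>w. E a w \<Longrightarrow> w = b"
  shows "is_tree (V - {a}) (\<lambda>x y. E x y \<and> x \<noteq> a \<and> y \<noteq> a)"
proof -
  have g: "is_graph V E" using t by (simp add: is_tree_def)
  have sym: "\<And>x y. E x y \<Longrightarrow> E y x" using g by (auto simp: is_graph_def)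
  have "b \<noteq> a" "b \<in> V" using g ab by (auto simp: is_graph_def)
  have "connected_graph (V - {a}) (\<lambda>x y. E x y \<and> x \<noteq> a \<and> y \<noteq> a)"
    unfolding connected_graph_def
  proof (intro ballI)
    fix u v assume u: "u \<in> V - {a}" and v: "v \<in> V - {a}"
    then have "E\<^sup>*\<^sup>* u v" using t by (auto simp: is_tree_def connected_graph_def)
    then show "(\<lambda>x y. E x y \<and> x \<noteq> a \<and> y \<noteq> a)\<^sup>*\<^sup>* u v"
      using rtranclp_avoid_leaf[of E a b, OF leaf sym \<open>b \<noteq> a\<close> \<open>E\<^sup>*\<^sup>* u v\<close>] u v by simp
  qed
  moreover have "is_graph (V - {a}) (\<lambda>x y. E x y \<and> x \<noteq> a \<and> y \<noteq> a)"
    using g by (auto simp: is_graph_def)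
  moreover have "acyclic_graph (V - {a}) (\<lambda>x y. E x y \<and> x \<noteq> a \<and> y \<noteq> a)"
    using t unfolding is_tree_def acyclic_graph_def by blast
  ultimately show ?thesis using \<open>b \<in> V\<close> \<open>b \<noteq> a\<close> by (auto simp: is_tree_def)
qed

definition bipartition_side :: "('a \<Rightarrow> 'a \<Rightarrow> bool) \<Rightarrow> 'a set \<Rightarrow> bool" where
  "bipartition_side E H \<longleftrightarrow> (\<forall>u v. E u v \<longrightarrow> (u \<in> H \<longleftrightarrow> v \<notin> H))"

lemma tree_bipartite:
  assumes "is_tree V E"
  shows "\<exists>H. bipartition_side E H"
  using assms
proof (induction "card V" arbitrary: V E rule: less_induct)
  case less
  have g: "is_graph V E" using less.prems by (simp add: is_tree_def)
  show ?case
  proof (cases "2 \<le> card V")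
    case False
    have "\<not> E u v" for u v
    proof
      assume "E u v"
      then have "{u, v} \<subseteq> V" "u \<noteq> v" using g by (auto simp: is_graph_def)
      then have "2 \<le> card V" using g card_mono[of V "{u, v}"] by (simp add: is_graph_def)
      then show False using False by simp
    qed
    then show ?thesis by (auto simp: bipartition_side_def)
  next
    case True
    obtain a b where "a \<in> V" and ab: "E a b" and leaf: "\<And>w. E a w \<Longrightarrow> w = b"
      using tree_has_leaf[OF less.prems True] by blast
    have "card (V - {a}) < card V"
      using g \<open>a \<in> V\<close> card_Diff1_less[of V a] by (simp add: is_graph_def)
    with less.hyps tree_remove_leaf[OF less.prems \<open>a \<in> V\<close> ab leaf]
    obtain H where H: "bipartition_side (\<lambda>x y. E x y \<and> x \<noteq> a \<and> y \<noteq> a) H"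
      by blast
    define H' where "H' = (if b \<in> H then H - {a} else insert a H)"
    have "b \<noteq> a" using g ab by (auto simp: is_graph_def)
    then have a_side: "a \<in> H' \<longleftrightarrow> b \<notin> H'" by (auto simp: H'_def)
    have "u \<in> H' \<longleftrightarrow> v \<notin> H'" if "E u v" for u v
    proof (cases "u = a \<or> v = a")
      case True
      then have "u = a \<and> v = b \<or> u = b \<and> v = a"
        using that leaf g by (auto simp: is_graph_def)
      then show ?thesis using a_side by blast
    next
      case False
      then show ?thesis using H that by (auto simp: bipartition_side_def H'_def)
    qed
    then show ?thesis unfolding bipartition_side_def by blast
  qed
qed

lemma bipartition_side_small:
  assumes "finite V" "bipartition_side E H" "\<And>u v. E u v \<Longrightarrow> u \<in> V \<and> v \<in> V"
  obtains H' where "H' \<subseteq> V" "bipartition_side E H'" "2 * card H' \<le> card V"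
proof (cases "2 * card (V \<inter> H) \<le> card V")
  case True
  moreover have "bipartition_side E (V \<inter> H)" using assms(2,3) by (auto simp: bipartition_side_def)
  ultimately show thesis using that by blast
next
  case False
  moreover have "bipartition_side E (V - H)" using assms(2,3) by (auto simp: bipartition_side_def)
  moreover have "card (V - H) = card V - card (V \<inter> H)" "card (V \<inter> H) \<le> card V"
    using assms(1) by (simp_all add: card_Diff_subset_Int Diff_Int2 card_mono)
  ultimately show thesis using that[of "V - H"] by auto
qed

section \<open>Permutation rows with nearly constant column sums\<close>

lemma bij_betw_endo:
  assumes "finite A" "f ` A \<subseteq> A" "inj_on f A"
  shows "bij_betw f A A"
  using assms by (simp add: bij_betw_imageI endo_inj_surj)

definition swap_pairs :: "nat \<Rightarrow> nat \<Rightarrow> nat \<Rightarrow> nat" where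
  "swap_pairs b k j = (if b \<le> j \<and> j < b + 2 * k then (if even (j - b) then j + 1 else j - 1) else j)"

lemma swap_pairs_swap_pairs [simp]: "swap_pairs b k (swap_pairs b k j) = j"
  unfolding swap_pairs_def by (auto; presburger)

lemma swap_pairs_cases:
  obtains "b \<le> j" "j < b + 2 * k" "even (j - b)" "swap_pairs b k j = j + 1"
  | "b \<le> j" "j < b + 2 * k" "odd (j - b)" "swap_pairs b k j + 1 = j"
  | "\<not> (b \<le> j \<and> j < b + 2 * k)" "swap_pairs b k j = j"
proof (cases "b \<le> j \<and> j < b + 2 * k")
  case True
  then show thesis
    using that(1,2) by (cases "even (j - b)") (auto simp: swap_pairs_def dest: odd_pos)
next
  case False
  moreover have "swap_pairs b k j = j" using False unfolding swap_pairs_def by (rule if_not_P)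
  ultimately show thesis by (rule that(3))
qed

lemma swap_pairs_less: "j < m \<Longrightarrow> b + 2 * k \<le> m \<Longrightarrow> swap_pairs b k j < m"
  unfolding swap_pairs_def by presburger

lemma swap_pairs_bij:
  assumes "b + 2 * k \<le> m"
  shows "bij_betw (swap_pairs b k) {0..<m} {0..<m}"
  by (rule bij_betw_byWitness[where f' = "swap_pairs b k"]) (auto simp: swap_pairs_less assms)

definition rot_half :: "nat \<Rightarrow> nat \<Rightarrow> nat" where
  "rot_half m j = (j + m div 2) mod m"

definition fold_half :: "nat \<Rightarrow> nat \<Rightarrow> nat" where
  "fold_half m j = (if j < m - m div 2 then 2 * (m - m div 2 - 1 - j) else 2 * (m - 1 - j) + 1)"

lemma rot_half_bij: "bij_betw (rot_half m) {0..<m} {0..<m}"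
proof (rule bij_betw_endo)
  show "inj_on (rot_half m) {0..<m}"
    by (rule inj_onI) (auto simp: rot_half_def mod_if split: if_splits)
qed (auto simp: rot_half_def)

lemma fold_half_bij: "bij_betw (fold_half m) {0..<m} {0..<m}"
proof (rule bij_betw_endo)
  show "inj_on (fold_half m) {0..<m}"
    by (rule inj_onI) (auto simp: fold_half_def split: if_splits; presburger)
qed (auto simp: fold_half_def)

lemma rot_fold_half_sum:
  assumes "j < m"
  shows "j + rot_half m j + fold_half m j =
    (if j < m - m div 2 then 2 * m - m div 2 - 2 else m + m div 2 - 1)"
  using assms by (auto simp: rot_half_def fold_half_def mod_if; linarith)

lemma reverse_bij: "bij_betw (\<lambda>j. m - 1 - j) {0..<m} {0..<m::nat}"
  by (rule bij_betw_byWitness[where f' = "\<lambda>j. m - 1 - j"]) auto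

(*
  Row 0 is the identity with the positions b + 2i and b + 2i + 1 (i < k) exchanged. Together
  with the identity, the next rows (rows 1 and 2 for odd n, the reversal j -> m - 1 - j for
  even n) give the column sums lead_sum: constant, except for odd n and m = 2h, where they are
  3h - 2 and 3h - 1 on the two halves (rot_fold_half_sum). The remaining rows come in pairs
  j, m - 1 - j and add tail_sum. So a column sum is lead_sum + tail_sum, moved up or down by one
  exactly where swap_pairs moves j (label_sum_eq).
*)
definition label_row :: "nat \<Rightarrow> nat \<Rightarrow> nat \<Rightarrow> nat \<Rightarrow> nat \<Rightarrow> nat \<Rightarrow> nat" where
  "label_row n m b k i =
     (if i = 0 then swap_pairs b k
      else if odd n \<and> i = 1 then rot_half m
      else if odd n \<and> i = 2 then fold_half m
      else if even (i + n) then id else (\<lambda>j. m - 1 - j))"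

lemma label_row_bij:
  assumes "b + 2 * k \<le> m"
  shows "bij_betw (label_row n m b k i) {0..<m} {0..<m}"
  unfolding label_row_def
  by (simp only: split: if_split)
    (blast intro: swap_pairs_bij[OF assms] rot_half_bij fold_half_bij reverse_bij)

lemma sum_alternating_rows:
  fixes j m n t :: nat
  assumes "j < m" "2 * t \<le> n"
  shows "(\<Sum>i\<in>{n - 2 * t..<n}. if even (i + n) then j else m - 1 - j) = t * (m - 1)"
  using assms(2)
proof (induction t)
  case (Suc t)
  define a where "a = n - 2 * Suc t"
  have a: "Suc a < n" "Suc (Suc a) = n - 2 * t" "even (a + n)"
    using Suc.prems by (auto simp: a_def)
  have "(\<Sum>i\<in>{a..<n}. if even (i + n) then j else m - 1 - j) =
        j + (m - 1 - j) + (\<Sum>i\<in>{Suc (Suc a)..<n}. if even (i + n) then j else m - 1 - j)"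
    using a by (simp add: sum.atLeast_Suc_lessThan)
  also have "\<dots> = Suc t * (m - 1)" using Suc a assms(1) by simp
  finally show ?case by (simp add: a_def)
qed simp

definition lead_sum :: "nat \<Rightarrow> nat \<Rightarrow> nat \<Rightarrow> nat" where
  "lead_sum n m j =
     (if odd n then (if j < m - m div 2 then 2 * m - m div 2 - 2 else m + m div 2 - 1) else m - 1)"

definition tail_sum :: "nat \<Rightarrow> nat \<Rightarrow> nat" where
  "tail_sum n m = (n - (if odd n then 3 else 2)) div 2 * (m - 1)"

definition label_sum :: "nat \<Rightarrow> nat \<Rightarrow> nat \<Rightarrow> nat \<Rightarrow> nat \<Rightarrow> nat" where
  "label_sum n m b k j = (\<Sum>i<n. label_row n m b k i j)"

lemma label_sum_eq:
  assumes "2 \<le> n" "j < m"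
  shows "label_sum n m b k j + j = swap_pairs b k j + lead_sum n m j + tail_sum n m"
proof -
  define a where "a = (if odd n then 3 else 2 :: nat)"
  define t where "t = (n - a) div 2"
  have "a \<le> n" using assms(1) by (auto simp: a_def elim: oddE)
  have t: "n - 2 * t = a" "2 * t \<le> n" using assms(1) by (auto simp: t_def a_def elim!: oddE evenE)
  have "label_sum n m b k j = (\<Sum>i<a. label_row n m b k i j) + (\<Sum>i\<in>{a..<n}. label_row n m b k i j)"
    unfolding label_sum_def using \<open>a \<le> n\<close>
    by (simp add: lessThan_atLeast0 sum.atLeastLessThan_concat)
  moreover have "(\<Sum>i\<in>{a..<n}. label_row n m b k i j) = tail_sum n m"
  proof -
    have "(\<Sum>i\<in>{a..<n}. label_row n m b k i j) =
        (\<Sum>i\<in>{n - 2 * t..<n}. if even (i + n) then j else m - 1 - j)"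
      using t by (intro sum.cong) (auto simp: label_row_def a_def)
    then show ?thesis using sum_alternating_rows[OF assms(2) t(2)] by (simp add: tail_sum_def t_def a_def)
  qed
  moreover have "(\<Sum>i<a. label_row n m b k i j) + j = swap_pairs b k j + lead_sum n m j"
  proof (cases "odd n")
    case True
    then have "(\<Sum>i<a. label_row n m b k i j) = swap_pairs b k j + rot_half m j + fold_half m j"
      by (simp add: a_def label_row_def numeral_3_eq_3)
    then show ?thesis using rot_fold_half_sum[OF assms(2)] True by (simp add: lead_sum_def)
  next
    case False
    then have "(\<Sum>i<a. label_row n m b k i j) = label_row n m b k 0 j + label_row n m b k 1 j"
      by (simp add: a_def numeral_2_eq_2)
    also have "\<dots> = swap_pairs b k j + (m - 1 - j)" using False by (simp add: label_row_def)
    finally show ?thesis using False assms(2) by (simp add: lead_sum_def)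
  qed
  ultimately show ?thesis by simp
qed

definition threshold_split :: "nat \<Rightarrow> nat \<Rightarrow> (nat \<Rightarrow> nat) \<Rightarrow> bool" where
  "threshold_split m p s \<longleftrightarrow> (\<exists>J \<theta> \<mu>. J \<subseteq> {0..<m} \<and> card J = p \<and>
     (\<forall>j\<in>J. \<theta> \<le> s j) \<and> (\<forall>j\<in>{0..<m} - J. s j < \<theta>) \<and>
     (\<forall>j<m. \<mu> \<le> s j \<and> s j \<le> \<mu> + 2) \<and> m \<le> \<mu> + 3)"

lemma threshold_splitI:
  assumes "J \<subseteq> {0..<m}" "card J = p" "\<And>j. j \<in> J \<Longrightarrow> \<theta> \<le> s j"
    "\<And>j. j < m \<Longrightarrow> j \<notin> J \<Longrightarrow> s j < \<theta>" "\<And>j. j < m \<Longrightarrow> \<mu> \<le> s j \<and> s j \<le> \<mu> + 2"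
    "m \<le> \<mu> + 3"
  shows "threshold_split m p s"
  unfolding threshold_split_def using assms by (intro exI[of _ J] exI[of _ \<theta>] exI[of _ \<mu>]) auto

lemma mem_even_offsets:
  "j \<in> (\<lambda>i. c + 2 * i) ` {..<k} \<longleftrightarrow> c \<le> j \<and> j < c + 2 * k \<and> even (j - c)" for c j k :: nat
proof
  assume H: "c \<le> j \<and> j < c + 2 * k \<and> even (j - c)"
  then have "2 * ((j - c) div 2) = j - c" using even_two_times_div_two by blast
  then have "j = c + 2 * ((j - c) div 2)" using H by linarith
  moreover have "(j - c) div 2 < k" using H by linarith
  ultimately show "j \<in> (\<lambda>i. c + 2 * i) ` {..<k}" by blast
qed auto

lemma card_even_offsets: "card ((\<lambda>i. c + 2 * i) ` {..<k}) = k" for c k :: nat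
  by (subst card_image) (auto simp: inj_on_def)

lemma threshold_split_balanced:
  assumes "2 \<le> n" "3 \<le> m" "2 * p \<le> m" "even n \<or> odd m"
  shows "threshold_split m p (label_sum n m 0 p)"
proof -
  define c where "c = lead_sum n m 0 + tail_sum n m"
  have lead: "lead_sum n m j = lead_sum n m 0" for j
    using assms(4) by (auto simp: lead_sum_def elim!: oddE)
  have "m - 1 \<le> c" by (auto simp: c_def lead_sum_def)
  have sum: "label_sum n m 0 p j = (if j < 2 * p then (if even j then c + 1 else c - 1) else c)"
    if "j < m" for j
    using label_sum_eq[OF assms(1) that, of 0 p] lead[of j] \<open>m - 1 \<le> c\<close> assms(2)
    by (cases rule: swap_pairs_cases[of 0 j p]) (auto simp: c_def)
  show ?thesis
  proof (rule threshold_splitI[where J = "(\<lambda>i. 0 + 2 * i) ` {..<p}" and \<theta> = "c + 1" and \<mu> = "c - 1"])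
    show "card ((\<lambda>i. 0 + 2 * i) ` {..<p}) = p" by (rule card_even_offsets)
  qed (use sum assms(3) \<open>m - 1 \<le> c\<close> assms(2) in \<open>auto simp: mem_even_offsets\<close>)
qed

lemma label_sum_odd_even:
  assumes "2 \<le> n" "odd n" "m = 2 * h" "h + 2 * k \<le> m" "j < m"
  shows "label_sum n m h k j =
    (if j < h then 3 * h - 2 else if j < h + 2 * k \<and> even (j - h) then 3 * h
     else if j < h + 2 * k then 3 * h - 2 else 3 * h - 1) + tail_sum n m"
proof -
  have "lead_sum n m j = (if j < h then 3 * h - 2 else 3 * h - 1)"
    using assms(2,3) by (simp add: lead_sum_def)
  moreover have "1 \<le> h" using assms(3,5) by simp
  ultimately show ?thesis
    using label_sum_eq[OF assms(1,5), of h k] by (cases rule: swap_pairs_cases[of h j k]) auto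
qed

lemma threshold_split_odd_even_small:
  assumes "2 \<le> n" "odd n" "m = 2 * h" "2 \<le> h" "2 * p \<le> h"
  shows "threshold_split m p (label_sum n m h p)"
proof -
  have sum: "label_sum n m h p j =
    (if j < h then 3 * h - 2 else if j < h + 2 * p \<and> even (j - h) then 3 * h
     else if j < h + 2 * p then 3 * h - 2 else 3 * h - 1) + tail_sum n m" if "j < m" for j
    using label_sum_odd_even[OF assms(1-3) _ that, of p] assms by simp
  show ?thesis
  proof (rule threshold_splitI[where J = "(\<lambda>i. h + 2 * i) ` {..<p}" and \<theta> = "3 * h + tail_sum n m"
        and \<mu> = "3 * h - 2 + tail_sum n m"])
    show "card ((\<lambda>i. h + 2 * i) ` {..<p}) = p" by (rule card_even_offsets)
  qed (use sum assms in \<open>auto simp: mem_even_offsets\<close>)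
qed

lemma threshold_split_odd_even_large:
  assumes "2 \<le> n" "odd n" "m = 2 * h" "2 \<le> h" "h < 2 * p" "p \<le> h"
  shows "threshold_split m p (label_sum n m h (h - p))"
proof -
  define k where "k = h - p"
  have k: "h + 2 * k \<le> m" "2 * k < h" using assms(3,5,6) by (auto simp: k_def)
  have sum: "label_sum n m h k j =
    (if j < h then 3 * h - 2 else if j < h + 2 * k \<and> even (j - h) then 3 * h
     else if j < h + 2 * k then 3 * h - 2 else 3 * h - 1) + tail_sum n m" if "j < m" for j
    using label_sum_odd_even[OF assms(1-3) k(1) that] .
  define J where "J = (\<lambda>i. h + 2 * i) ` {..<k} \<union> {h + 2 * k..<m}"
  have "card J = k + (m - (h + 2 * k))"
    unfolding J_def by (subst card_Un_disjoint) (auto simp: card_even_offsets)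
  then have "card J = p" using assms(3,6) k by (simp add: k_def)
  show ?thesis unfolding k_def[symmetric]
  proof (rule threshold_splitI[where J = J and \<theta> = "3 * h - 1 + tail_sum n m"
        and \<mu> = "3 * h - 2 + tail_sum n m"])
    show "card J = p" by fact
  qed (use sum assms k in \<open>auto simp: J_def mem_even_offsets\<close>)
qed

lemma label_sum_threshold_split:
  assumes "2 \<le> n" "3 \<le> m" "2 * p \<le> m"
  obtains b k where "b + 2 * k \<le> m" "threshold_split m p (label_sum n m b k)"
proof (cases "even n \<or> odd m")
  case True
  then show thesis using that[of 0 p] threshold_split_balanced[OF assms True] assms(3) by simp
next
  case False
  then obtain h where h: "odd n" "m = 2 * h" by auto
  then have "2 \<le> h" "p \<le> h" using assms(2,3) by auto
  show thesis
  proof (cases "2 * p \<le> h")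
    case True
    then show thesis
      using that[of h p] threshold_split_odd_even_small[OF assms(1) h \<open>2 \<le> h\<close>] h by simp
  next
    case False
    then show thesis
      using that[of h "h - p"] threshold_split_odd_even_large[OF assms(1) h \<open>2 \<le> h\<close> _ \<open>p \<le> h\<close>] h
      by simp
  qed
qed

section \<open>Labelings of the lexicographic product with an edgeless graph\<close>

lemma ex_bij_betw_subset_onto:
  assumes "finite A" "finite B" "card A = card B" "A' \<subseteq> A" "B' \<subseteq> B" "card A' = card B'"
  obtains \<sigma> where "bij_betw \<sigma> A B" "\<sigma> ` A' = B'"
proof -
  have fin: "finite A'" "finite B'" "finite (A - A')" "finite (B - B')"
    using assms finite_subset by auto
  obtain \<sigma>1 where \<sigma>1: "bij_betw \<sigma>1 A' B'"
    using finite_same_card_bij[OF fin(1,2) assms(6)] by blast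
  have "card (A - A') = card (B - B')"
    using assms fin by (simp add: card_Diff_subset)
  then obtain \<sigma>2 where \<sigma>2: "bij_betw \<sigma>2 (A - A') (B - B')"
    using finite_same_card_bij[OF fin(3,4)] by blast
  define \<sigma> where "\<sigma> x = (if x \<in> A' then \<sigma>1 x else \<sigma>2 x)" for x
  have "bij_betw \<sigma> A' B'" using \<sigma>1 by (rule bij_betw_cong[THEN iffD1, rotated]) (simp add: \<sigma>_def)
  moreover have "bij_betw \<sigma> (A - A') (B - B')"
    using \<sigma>2 by (rule bij_betw_cong[THEN iffD1, rotated]) (simp add: \<sigma>_def)
  ultimately have "bij_betw \<sigma> (A' \<union> (A - A')) (B' \<union> (B - B'))"
    by (rule bij_betw_combine) auto
  then have "bij_betw \<sigma> A B" using assms(4,5) by (simp add: Un_absorb1)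
  moreover have "\<sigma> ` A' = B'" using \<open>bij_betw \<sigma> A' B'\<close> by (simp add: bij_betw_def)
  ultimately show thesis using that by blast
qed

lemma row_labeling_bij:
  fixes r :: "nat \<Rightarrow> nat \<Rightarrow> nat"
  assumes \<sigma>: "bij_betw \<sigma> V {0..<m}" and r: "\<And>i. i < n \<Longrightarrow> bij_betw (r i) {0..<m} {0..<m}"
  shows "bij_betw (\<lambda>(v, i). i * m + r i (\<sigma> v) + 1) (V \<times> {0..<n}) {1..m * n}"
proof -
  define f where "f = (\<lambda>(v, i). i * m + r i (\<sigma> v) + 1)"
  have r_less: "r i (\<sigma> v) < m" if "v \<in> V" "i < n" for v i
    using bij_betwE[OF \<sigma>] bij_betwE[OF r] that by auto
  have "inj_on f (V \<times> {0..<n})"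
  proof (rule inj_onI, clarify)
    fix v i w j
    assume vw: "v \<in> V" "w \<in> V" "i \<in> {0..<n}" "j \<in> {0..<n}" and eq: "f (v, i) = f (w, j)"
    have eq': "i * m + r i (\<sigma> v) = j * m + r j (\<sigma> w)" using eq by (simp add: f_def)
    have "r i (\<sigma> v) < m" "r j (\<sigma> w) < m" using r_less vw by auto
    then have "(i * m + r i (\<sigma> v)) div m = i" "(j * m + r j (\<sigma> w)) div m = j" by auto
    then have "i = j" using eq' by simp
    moreover have "r i (\<sigma> v) = r j (\<sigma> w)" using eq' \<open>i = j\<close> by simp
    moreover have "\<sigma> v \<in> {0..<m}" "\<sigma> w \<in> {0..<m}" using bij_betwE[OF \<sigma>] vw by auto
    moreover have "inj_on (r i) {0..<m}" using r[of i] vw bij_betw_imp_inj_on by auto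
    ultimately have "\<sigma> v = \<sigma> w" using \<open>i = j\<close> by (metis inj_onD)
    then show "v = w \<and> i = j"
      using inj_onD[OF bij_betw_imp_inj_on[OF \<sigma>]] vw \<open>i = j\<close> by blast
  qed
  moreover have "f ` (V \<times> {0..<n}) \<subseteq> {1..m * n}"
  proof clarify
    fix v i assume "v \<in> V" "i \<in> {0..<n}"
    then have "r i (\<sigma> v) < m" using r_less by simp
    then have "f (v, i) \<le> (i + 1) * m" by (simp add: f_def)
    also have "\<dots> \<le> n * m" using \<open>i \<in> {0..<n}\<close> by (intro mult_le_mono1) simp
    finally show "f (v, i) \<in> {1..m * n}" by (simp add: f_def mult.commute)
  qed
  moreover have "card (V \<times> {0..<n}) = m * n"
    using bij_betw_same_card[OF \<sigma>] by (simp add: card_cartesian_product)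
  moreover have "finite V" using bij_betw_finite[OF \<sigma>] by simp
  ultimately have "f ` (V \<times> {0..<n}) = {1..m * n}"
    by (intro card_subset_eq) (simp_all add: card_image)
  then show ?thesis using \<open>inj_on f _\<close> unfolding f_def by (simp add: bij_betw_def)
qed

definition fibre_sum :: "('a \<times> nat \<Rightarrow> nat) \<Rightarrow> nat \<Rightarrow> 'a \<Rightarrow> nat" where
  "fibre_sum f n x = (\<Sum>i<n. f (x, i))"

lemma weight_lex_empty:
  "weight (V \<times> empty_verts n) (lex_edges E empty_edges) f (x, i) = (\<Sum>y\<in>nbhd V E x. fibre_sum f n y)"
proof -
  have "nbhd (V \<times> empty_verts n) (lex_edges E empty_edges) (x, i) = nbhd V E x \<times> {..<n}"
    by (auto simp: nbhd_def lex_edges_def empty_edges_def empty_verts_def)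
  then show ?thesis by (simp add: weight_def fibre_sum_def sum.cartesian_product)
qed

lemma nbhd_sums_differ_side:
  assumes g: "is_graph V E" and H: "bipartition_side E H"
    and high: "\<And>v. v \<in> V \<Longrightarrow> v \<in> H \<Longrightarrow> \<theta> \<le> S v" and low: "\<And>v. v \<in> V \<Longrightarrow> v \<notin> H \<Longrightarrow> S v < \<theta>"
    and window: "\<And>v. v \<in> V \<Longrightarrow> \<mu> \<le> S v \<and> S v \<le> \<mu> + 2" and \<mu>: "2 * card V \<le> \<mu> + 1"
    and "E x y" "x \<in> H"
  shows "(\<Sum>v\<in>nbhd V E x. S v) \<noteq> (\<Sum>v\<in>nbhd V E y. S v)"
proof -
  define Nx Ny where "Nx = nbhd V E x" and "Ny = nbhd V E y"
  have fin: "finite V" using g by (simp add: is_graph_def)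
  have Nx: "Nx \<subseteq> V - H" and Ny: "Ny \<subseteq> V \<inter> H"
    using H g \<open>E x y\<close> \<open>x \<in> H\<close> unfolding Nx_def Ny_def nbhd_def bipartition_side_def is_graph_def
    by blast+
  have "y \<in> Nx" "y \<in> V" using g \<open>E x y\<close> by (auto simp: Nx_def nbhd_def is_graph_def)
  then have "1 \<le> card Nx" using fin Nx by (metis One_nat_def Suc_leI card_gt_0_iff empty_iff finite_Diff
        finite_subset)
  have "Ny \<subseteq> V - {y}" using g by (auto simp: Ny_def nbhd_def is_graph_def)
  then have "card Ny + 1 \<le> card V"
    using fin \<open>y \<in> V\<close> card_mono[of "V - {y}" Ny] card_gt_0_iff[of V]
    by (auto simp: card_Diff_singleton_if)
  have "1 \<le> \<theta>" using low \<open>y \<in> Nx\<close> Nx by fastforce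
  show ?thesis
  proof (cases "card Nx \<le> card Ny")
    case True
    have "sum S Nx \<le> card Nx * (\<theta> - 1)"
      using sum_bounded_above[of Nx S "\<theta> - 1"] Nx low by fastforce
    also have "\<dots> < card Nx * \<theta>" using \<open>1 \<le> card Nx\<close> \<open>1 \<le> \<theta>\<close> by simp
    also have "\<dots> \<le> card Ny * \<theta>" using True by simp
    also have "\<dots> \<le> sum S Ny" using sum_bounded_below[of Ny \<theta> S] Ny high by fastforce
    finally show ?thesis by (simp add: Nx_def Ny_def)
  next
    case False
    have "sum S Ny \<le> card Ny * (\<mu> + 2)"
      using sum_bounded_above[of Ny S "\<mu> + 2"] Ny window by fastforce
    also have "\<dots> < (card Ny + 1) * \<mu>" using \<open>card Ny + 1 \<le> card V\<close> \<mu> by simp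
    also have "\<dots> \<le> card Nx * \<mu>" using False by (intro mult_le_mono1) simp
    also have "\<dots> \<le> sum S Nx" using sum_bounded_below[of Nx \<mu> S] Nx window by fastforce
    finally show ?thesis by (simp add: Nx_def Ny_def)
  qed
qed

lemma nbhd_sums_differ:
  assumes g: "is_graph V E" and H: "bipartition_side E H"
    and bounds: "\<And>v. v \<in> V \<Longrightarrow> v \<in> H \<Longrightarrow> \<theta> \<le> S v" "\<And>v. v \<in> V \<Longrightarrow> v \<notin> H \<Longrightarrow> S v < \<theta>"
      "\<And>v. v \<in> V \<Longrightarrow> \<mu> \<le> S v \<and> S v \<le> \<mu> + 2" "2 * card V \<le> \<mu> + 1"
    and "E x y"
  shows "(\<Sum>v\<in>nbhd V E x. S v) \<noteq> (\<Sum>v\<in>nbhd V E y. S v)"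
proof (cases "x \<in> H")
  case True
  show ?thesis using g H bounds \<open>E x y\<close> True by (rule nbhd_sums_differ_side)
next
  case False
  then have "y \<in> H" using H \<open>E x y\<close> by (auto simp: bipartition_side_def)
  moreover have "E y x" using g \<open>E x y\<close> by (simp add: is_graph_def)
  ultimately have "(\<Sum>v\<in>nbhd V E y. S v) \<noteq> (\<Sum>v\<in>nbhd V E x. S v)"
    using g H bounds by (intro nbhd_sums_differ_side)
  then show ?thesis by (rule not_sym)
qed

lemma lex_lda_if_nbhd_sums_differ:
  assumes "bij_betw f (V \<times> empty_verts n) {1..card (V \<times> empty_verts n)}"
    and "\<And>v w. E v w \<Longrightarrow> (\<Sum>u\<in>nbhd V E v. fibre_sum f n u) \<noteq> (\<Sum>u\<in>nbhd V E w. fibre_sum f n u)"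
  shows "local_dist_antimagic (V \<times> empty_verts n) (lex_edges E empty_edges) f"
proof -
  have "weight (V \<times> empty_verts n) (lex_edges E empty_edges) f x
      \<noteq> weight (V \<times> empty_verts n) (lex_edges E empty_edges) f y"
    if "lex_edges E empty_edges x y" for x y
  proof -
    obtain v i w j where xy: "x = (v, i)" "y = (w, j)" by fastforce
    then have "E v w" using that by (simp add: lex_edges_def empty_edges_def)
    then show ?thesis using assms(2) xy by (simp add: weight_lex_empty)
  qed
  then show ?thesis using assms(1) unfolding local_dist_antimagic_def by blast
qed

lemma bipartite_lex_lda_exists:
  assumes g: "is_graph V E" and H: "bipartition_side E H" and V3: "3 \<le> card V" and n2: "2 \<le> n"
  obtains f where "local_dist_antimagic (V \<times> empty_verts n) (lex_edges E empty_edges) f"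
proof -
  define m where "m = card V"
  have fin: "finite V" using g by (simp add: is_graph_def)
  obtain Hi where Hi: "Hi \<subseteq> V" "bipartition_side E Hi" "2 * card Hi \<le> m"
    using bipartition_side_small[OF fin H] g unfolding m_def is_graph_def by metis
  obtain b k where "b + 2 * k \<le> m" and "threshold_split m (card Hi) (label_sum n m b k)"
    using label_sum_threshold_split[OF n2 V3[folded m_def] Hi(3)] .
  then obtain J \<theta> \<mu> where J: "J \<subseteq> {0..<m}" "card J = card Hi"
    and high: "\<forall>j\<in>J. \<theta> \<le> label_sum n m b k j" and low: "\<forall>j\<in>{0..<m} - J. label_sum n m b k j < \<theta>"
    and window: "\<forall>j<m. \<mu> \<le> label_sum n m b k j \<and> label_sum n m b k j \<le> \<mu> + 2" and "m \<le> \<mu> + 3"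
    unfolding threshold_split_def by blast
  obtain \<sigma> where \<sigma>: "bij_betw \<sigma> V {0..<m}" "\<sigma> ` Hi = J"
    by (rule ex_bij_betw_subset_onto[OF fin _ _ Hi(1) J(1)]) (auto simp: m_def J(2))
  define f where "f = (\<lambda>(v, i). i * m + label_row n m b k i (\<sigma> v) + 1)"
  have "bij_betw f (V \<times> empty_verts n) {1..card (V \<times> empty_verts n)}"
    using row_labeling_bij[OF \<sigma>(1) label_row_bij[OF \<open>b + 2 * k \<le> m\<close>]]
    by (simp add: f_def empty_verts_def card_cartesian_product m_def)
  define c where "c = (\<Sum>i<n. i * m + 1)"
  have fibre: "fibre_sum f n v = c + label_sum n m b k (\<sigma> v)" for v
    unfolding fibre_sum_def f_def c_def label_sum_def sum.distrib[symmetric]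
    by (rule sum.cong) simp_all
  have "(\<Sum>i<2. i * m + 1) \<le> c" unfolding c_def using n2 by (intro sum_mono2) auto
  then have "m + 2 \<le> c" by (simp add: numeral_2_eq_2)
  have \<sigma>V: "\<sigma> v < m" if "v \<in> V" for v using bij_betwE[OF \<sigma>(1)] that by auto
  have "(\<Sum>u\<in>nbhd V E v. fibre_sum f n u) \<noteq> (\<Sum>u\<in>nbhd V E w. fibre_sum f n u)"
    if "E v w" for v w
  proof (rule nbhd_sums_differ[OF g Hi(2) _ _ _ _ that, where \<theta> = "c + \<theta>" and \<mu> = "c + \<mu>"])
    show "c + \<theta> \<le> fibre_sum f n u" if "u \<in> V" "u \<in> Hi" for u
      using high \<sigma>(2) that by (auto simp: fibre)
    show "fibre_sum f n u < c + \<theta>" if "u \<in> V" "u \<notin> Hi" for u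
    proof -
      have "\<sigma> u \<notin> J"
        using that \<sigma> Hi(1) inj_on_image_mem_iff[OF bij_betw_imp_inj_on[OF \<sigma>(1)]] by blast
      then show ?thesis using low \<sigma>V[OF that(1)] by (simp add: fibre)
    qed
    show "c + \<mu> \<le> fibre_sum f n u \<and> fibre_sum f n u \<le> c + \<mu> + 2" if "u \<in> V" for u
      using window \<sigma>V[OF that] by (simp add: fibre)
    show "2 * card V \<le> c + \<mu> + 1" using \<open>m + 2 \<le> c\<close> \<open>m \<le> \<mu> + 3\<close> by (simp add: m_def)
  qed
  then show thesis using that lex_lda_if_nbhd_sums_differ[OF \<open>bij_betw f _ _\<close>] by blast
qed

section \<open>Labelings with two weights\<close>

lemma lda_weights_card_ge2:
  assumes "local_dist_antimagic V E f" "finite V" "u \<in> V" "v \<in> V" "E u v"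
  shows "2 \<le> card (weight V E f ` V)"
proof -
  have "weight V E f u \<noteq> weight V E f v" using assms unfolding local_dist_antimagic_def by blast
  then have "card {weight V E f u, weight V E f v} = 2" by simp
  moreover have "{weight V E f u, weight V E f v} \<subseteq> weight V E f ` V" using assms by blast
  ultimately show ?thesis using card_mono[OF finite_imageI[OF \<open>finite V\<close>]] by metis
qed

lemma lex_lda_weights_card_ge2:
  assumes g: "is_graph V E" and "connected_graph V E" "2 \<le> card V" "1 \<le> n"
    and "local_dist_antimagic (V \<times> empty_verts n) (lex_edges E empty_edges) f"
  shows "2 \<le> card (weight (V \<times> empty_verts n) (lex_edges E empty_edges) f ` (V \<times> empty_verts n))"
proof -
  obtain u v where "E u v" using connected_graph_has_edge[OF assms(2,3)] .
  then have edge: "(u, 0) \<in> V \<times> empty_verts n" "(v, 0) \<in> V \<times> empty_verts n"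
    "lex_edges E empty_edges (u, 0) (v, 0)"
    using g \<open>1 \<le> n\<close> by (auto simp: is_graph_def empty_verts_def lex_edges_def)
  have "finite (V \<times> empty_verts n)" using g by (simp add: is_graph_def empty_verts_def)
  then show ?thesis by (rule lda_weights_card_ge2[OF assms(5) _ edge])
qed

lemma star_lex_weights_card_le2:
  assumes "is_star V E"
  shows "card (weight (V \<times> empty_verts n) (lex_edges E empty_edges) f ` (V \<times> empty_verts n)) \<le> 2"
proof -
  obtain c where "c \<in> V" and star: "\<And>u v. E u v \<longleftrightarrow> u \<in> V \<and> v \<in> V \<and> u \<noteq> v \<and> (u = c \<or> v = c)"
    using assms by (auto simp: is_star_def)
  have leaf_nbhd: "nbhd V E x = {c}" if "x \<in> V" "x \<noteq> c" for x
    using star that \<open>c \<in> V\<close> by (auto simp: nbhd_def)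
  have "weight (V \<times> empty_verts n) (lex_edges E empty_edges) f (x, i)
      \<in> {\<Sum>y\<in>nbhd V E c. fibre_sum f n y, fibre_sum f n c}" if "x \<in> V" for x i
    using that by (cases "x = c") (simp_all add: weight_lex_empty leaf_nbhd)
  then have "weight (V \<times> empty_verts n) (lex_edges E empty_edges) f ` (V \<times> empty_verts n)
      \<subseteq> {\<Sum>y\<in>nbhd V E c. fibre_sum f n y, fibre_sum f n c}"
    by auto
  moreover have "card {\<Sum>y\<in>nbhd V E c. fibre_sum f n y, fibre_sum f n c} \<le> 2"
    by (simp add: card_insert_if)
  ultimately show ?thesis by (meson card_mono finite.emptyI finite.insertI order_trans)
qed

lemma star_if_nbrs_pendant:
  assumes g: "is_graph V E" and conn: "connected_graph V E" and "c \<in> V"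
    and pendant: "\<And>u w. E c u \<Longrightarrow> E u w \<Longrightarrow> w = c"
  shows "is_star V E"
proof -
  have reach: "x = c \<or> E c x" if "x \<in> V" for x
  proof -
    have "E\<^sup>*\<^sup>* c x" using conn \<open>c \<in> V\<close> that by (simp add: connected_graph_def)
    then show ?thesis by (induction rule: rtranclp_induct) (auto dest: pendant)
  qed
  have "E u v \<longleftrightarrow> u \<in> V \<and> v \<in> V \<and> u \<noteq> v \<and> (u = c \<or> v = c)" for u v
  proof
    assume "E u v"
    moreover have "u \<in> V" "v \<in> V" "u \<noteq> v" using g \<open>E u v\<close> by (auto simp: is_graph_def)
    ultimately show "u \<in> V \<and> v \<in> V \<and> u \<noteq> v \<and> (u = c \<or> v = c)"
      using reach[of u] pendant by blast
  next
    assume "u \<in> V \<and> v \<in> V \<and> u \<noteq> v \<and> (u = c \<or> v = c)"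
    then show "E u v" using reach g by (auto simp: is_graph_def)
  qed
  then show ?thesis using \<open>c \<in> V\<close> unfolding is_star_def by blast
qed

lemma two_nbhd_sums_star:
  fixes S :: "'a \<Rightarrow> nat"
  assumes t: "is_tree V E" and "2 \<le> card V" and pos: "\<And>x. x \<in> V \<Longrightarrow> 0 < S x"
    and proper: "\<And>x y. E x y \<Longrightarrow> (\<Sum>v\<in>nbhd V E x. S v) \<noteq> (\<Sum>v\<in>nbhd V E y. S v)"
    and two: "card ((\<lambda>x. \<Sum>v\<in>nbhd V E x. S v) ` V) \<le> 2"
  shows "is_star V E"
proof -
  define W where "W x = (\<Sum>v\<in>nbhd V E x. S v)" for x
  have g: "is_graph V E" using t by (simp add: is_tree_def)
  then have fin: "finite V" and sym: "\<And>x y. E x y \<Longrightarrow> E y x"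
    and EV: "\<And>x y. E x y \<Longrightarrow> x \<in> V \<and> y \<in> V" by (auto simp: is_graph_def)
  obtain a b where "a \<in> V" "E a b" and leaf: "\<And>w. E a w \<Longrightarrow> w = b"
    using tree_has_leaf[OF t \<open>2 \<le> card V\<close>] by blast
  have "b \<in> V" using EV[OF \<open>E a b\<close>] by simp
  have "nbhd V E a = {b}" using leaf \<open>E a b\<close> \<open>b \<in> V\<close> unfolding nbhd_def by blast
  then have Wa: "W a = S b" by (simp add: W_def)
  have "w = b" if "E b u" "E u w" for u w
  proof (rule ccontr)
    assume "w \<noteq> b"
    have "W u = W a"
    proof (rule ccontr)
      assume "W u \<noteq> W a"
      moreover have "W a \<noteq> W b" using proper[OF \<open>E a b\<close>] by (simp add: W_def)
      moreover have "W u \<noteq> W b" using proper[OF sym[OF \<open>E b u\<close>]] by (simp add: W_def)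
      ultimately have "card {W a, W b, W u} = 3" by simp
      moreover have "{W a, W b, W u} \<subseteq> W ` V" using \<open>a \<in> V\<close> \<open>b \<in> V\<close> EV \<open>E b u\<close> by blast
      ultimately have "3 \<le> card (W ` V)" using card_mono[OF finite_imageI[OF fin]] by metis
      then show False using two by (simp add: W_def[abs_def])
    qed
    have "{b, w} \<subseteq> nbhd V E u" using EV sym that by (auto simp: nbhd_def)
    moreover have "finite (nbhd V E u)" using fin by (simp add: nbhd_def)
    ultimately have "sum S {b, w} \<le> W u" unfolding W_def by (simp add: sum_mono2)
    then have "S b + S w \<le> W u" using \<open>w \<noteq> b\<close> by simp
    then show False using \<open>W u = W a\<close> Wa pos[of w] EV \<open>E u w\<close> by simp
  qed
  then show ?thesis
    using star_if_nbrs_pendant[OF g _ \<open>b \<in> V\<close>] t by (simp add: is_tree_def)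
qed

lemma lex_lda_two_weights_star:
  assumes t: "is_tree V E" "2 \<le> card V" and "1 \<le> n"
    and lda: "local_dist_antimagic (V \<times> empty_verts n) (lex_edges E empty_edges) f"
    and two: "card (weight (V \<times> empty_verts n) (lex_edges E empty_edges) f ` (V \<times> empty_verts n)) = 2"
  shows "is_star V E"
proof (rule two_nbhd_sums_star[OF t, where S = "fibre_sum f n"])
  have in_prod: "(x, 0) \<in> V \<times> empty_verts n" if "x \<in> V" for x
    using that \<open>1 \<le> n\<close> by (simp add: empty_verts_def)
  show "0 < fibre_sum f n x" if "x \<in> V" for x
  proof -
    have "f (x, 0) \<in> {1..card (V \<times> empty_verts n)}"
      using lda in_prod[OF that] unfolding local_dist_antimagic_def by (blast dest: bij_betwE)
    moreover have "f (x, 0) \<le> fibre_sum f n x"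
      unfolding fibre_sum_def using \<open>1 \<le> n\<close> by (intro member_le_sum) auto
    ultimately show ?thesis by simp
  qed
  show "(\<Sum>v\<in>nbhd V E x. fibre_sum f n v) \<noteq> (\<Sum>v\<in>nbhd V E y. fibre_sum f n v)" if "E x y" for x y
  proof -
    have "x \<in> V" "y \<in> V" using t(1) that by (auto simp: is_tree_def is_graph_def)
    moreover have "lex_edges E empty_edges (x, 0) (y, 0)" using that by (simp add: lex_edges_def)
    ultimately show ?thesis
      using lda in_prod unfolding local_dist_antimagic_def by (metis weight_lex_empty)
  qed
  have "weight (V \<times> empty_verts n) (lex_edges E empty_edges) f ` (V \<times> empty_verts n)
      = (\<lambda>x. \<Sum>v\<in>nbhd V E x. fibre_sum f n v) ` V"
    using in_prod by (force simp: weight_lex_empty)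
  then show "card ((\<lambda>x. \<Sum>v\<in>nbhd V E x. fibre_sum f n v) ` V) \<le> 2" using two by simp
qed

lemma chi_ld_eqI:
  assumes "local_dist_antimagic V E f" "card (weight V E f ` V) = k"
    and "\<And>g. local_dist_antimagic V E g \<Longrightarrow> k \<le> card (weight V E g ` V)"
  shows "chi_ld V E = k"
  unfolding chi_ld_def using assms by (intro Least_equality) blast+

lemma chi_ld_attained:
  assumes "local_dist_antimagic V E f"
  obtains g where "local_dist_antimagic V E g" "card (weight V E g ` V) = chi_ld V E"
  using LeastI_ex[of "\<lambda>k. \<exists>g. local_dist_antimagic V E g \<and> card (weight V E g ` V) = k"] assms that
  unfolding chi_ld_def by blast

theorem mainTheorem9:
  fixes V :: "'a set" and E :: "'a \<Rightarrow> 'a \<Rightarrow> bool" and n :: nat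
  assumes "n \<ge> 2" and "is_tree V E" and "card V \<ge> 3"
  shows "chi_ld (V \<times> empty_verts n) (lex_edges E empty_edges) = 2 \<longleftrightarrow> is_star V E"
proof -
  let ?V = "V \<times> empty_verts n" and ?E = "lex_edges E empty_edges"
  have g: "is_graph V E" and conn: "connected_graph V E" and V2: "2 \<le> card V" and n1: "1 \<le> n"
    using assms by (auto simp: is_tree_def)
  obtain H where "bipartition_side E H" using tree_bipartite[OF assms(2)] ..
  then obtain f0 where f0: "local_dist_antimagic ?V ?E f0"
    using bipartite_lex_lda_exists[OF g _ assms(3,1)] by blast
  have ge2: "2 \<le> card (weight ?V ?E f ` ?V)" if "local_dist_antimagic ?V ?E f" for f
    using lex_lda_weights_card_ge2[OF g conn V2 n1 that] .
  show ?thesis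
  proof
    assume "chi_ld ?V ?E = 2"
    with chi_ld_attained[OF f0] obtain f
      where "local_dist_antimagic ?V ?E f" "card (weight ?V ?E f ` ?V) = 2" by metis
    then show "is_star V E" by (rule lex_lda_two_weights_star[OF assms(2) V2 n1])
  next
    assume "is_star V E"
    then have "card (weight ?V ?E f0 ` ?V) = 2"
      using star_lex_weights_card_le2 ge2[OF f0] by (blast intro: antisym)
    then show "chi_ld ?V ?E = 2" by (rule chi_ld_eqI[OF f0 _ ge2])
  qed
qed

end
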